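(* Let $\langle L,\leq\rangle$, $\langle K,\leq\rangle$ be complete lattices and $f:L\to K$ a surjective lattice morphism. Let $O:L\to L$ be an operator and $A:L^2\to L^2$ an approximator of $O$ such that both $O$ and $A$ respect $f$, and let $A_f$ be the projection of $A$ on $K$. If $(x',y')$ is an $A$-refinement of $(x,y)$, then $(f(x'),f(y'))$ is an $A_f$-refinement of $(f(x),f(y))$.
   Context: A lattice morphism satisfies $f(\bigvee X)=\bigvee f(X)$, $f(\bigwedge X)=\bigwedge f(X)$ for all $X\subseteq L$. $L^2$ has precision order $(x,y)\leq_p(u,v)$ iff $x\leq u,v\leq y$; $(x,y)_1=x,(x,y)_2=y$. An approximator of $O$ is a $\leq_p$-monotone $A$ with $A(x,x)_1\leq O(x)\leq A(x,x)_2$, assumed symmetric ($A(x,y)_1=A(y,x)_2$). $O$ respects $f$ if $f(x)=f(y)$ implies $f(O(x))=f(O(y))$. With $f^2(x,y)=(f(x),f(y))$, $A$ respects $f$ if $f^2(p)=f^2(q)$ implies $f^2(A(p))=f^2(A(q))$; $A_f$ is the unique operator on $K^2$ with $A_f\circ f^2=f^2\circ A$. For an operator $B$ on a bilattice $M^2$, a $B$-refinement of $(x,y)$ is a pair $(x',y')$ with either $(x,y)\leq_p(x',y')\leq_p B(x,y)$, or $x'=x$ and $B(x,y')_2\leq y'\leq y$. *)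

theory Defs
  imports Main
begin

definition lattice_morphism :: "('a::complete_lattice \<Rightarrow> 'b::complete_lattice) \<Rightarrow> bool" where
  "lattice_morphism f \<longleftrightarrow> (\<forall>X. f (Sup X) = Sup (f ` X) \<and> f (Inf X) = Inf (f ` X))"

definition leq_p :: "'a::complete_lattice \<times> 'a \<Rightarrow> 'a \<times> 'a \<Rightarrow> bool" where
  "leq_p p q \<longleftrightarrow> fst p \<le> fst q \<and> snd q \<le> snd p"

definition approximator ::
  "('a::complete_lattice \<times> 'a \<Rightarrow> 'a \<times> 'a) \<Rightarrow> ('a \<Rightarrow> 'a) \<Rightarrow> bool" where
  "approximator A Op \<longleftrightarrow>
     (\<forall>p q. leq_p p q \<longrightarrow> leq_p (A p) (A q)) \<and>
     (\<forall>x. fst (A (x, x)) \<le> Op x \<and> Op x \<le> snd (A (x, x)))"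

definition symmetric_approx :: "('a \<times> 'a \<Rightarrow> 'a \<times> 'a) \<Rightarrow> bool" where
  "symmetric_approx A \<longleftrightarrow> (\<forall>x y. fst (A (x, y)) = snd (A (y, x)))"

definition sq :: "('a \<Rightarrow> 'b) \<Rightarrow> 'a \<times> 'a \<Rightarrow> 'b \<times> 'b" where
  "sq f p = (f (fst p), f (snd p))"

definition op_respects :: "('a \<Rightarrow> 'a) \<Rightarrow> ('a \<Rightarrow> 'b) \<Rightarrow> bool" where
  "op_respects Op f \<longleftrightarrow> (\<forall>x y. f x = f y \<longrightarrow> f (Op x) = f (Op y))"

definition approx_respects :: "('a \<times> 'a \<Rightarrow> 'a \<times> 'a) \<Rightarrow> ('a \<Rightarrow> 'b) \<Rightarrow> bool" where
  "approx_respects A f \<longleftrightarrow> (\<forall>p q. sq f p = sq f q \<longrightarrow> sq f (A p) = sq f (A q))"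

text \<open>Projection A_f: the operator on K^2 with A_f o f^2 = f^2 o A
  (well defined and unique when f is surjective and A respects f).\<close>
definition proj_approx :: "('a \<times> 'a \<Rightarrow> 'a \<times> 'a) \<Rightarrow> ('a \<Rightarrow> 'b) \<Rightarrow> 'b \<times> 'b \<Rightarrow> 'b \<times> 'b" where
  "proj_approx A f = (THE B. \<forall>p. B (sq f p) = sq f (A p))"

definition refinement :: "('a::complete_lattice \<times> 'a \<Rightarrow> 'a \<times> 'a) \<Rightarrow> 'a \<times> 'a \<Rightarrow> 'a \<times> 'a \<Rightarrow> bool" where
  "refinement B p p' \<longleftrightarrow>
     (leq_p p p' \<and> leq_p p' (B p)) \<or>
     (fst p' = fst p \<and> snd (B (fst p, snd p')) \<le> snd p' \<and> snd p' \<le> snd p)"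

end

theory Submission
  imports Defs
begin

text \<open>Since A_f o f^2 = f^2 o A, each inequality defining an A-refinement is carried
  by the monotone map f to the corresponding inequality for A_f.\<close>

lemma lattice_morphism_mono:
  assumes "lattice_morphism f" and "a \<le> b"
  shows "f a \<le> f b"
proof -
  have "f b = f (Sup {a, b})"
    using \<open>a \<le> b\<close> by (simp add: sup_absorb2)
  also have "\<dots> = Sup (f ` {a, b})"
    using assms(1) unfolding lattice_morphism_def by blast
  also have "\<dots> = sup (f a) (f b)"
    by simp
  finally show ?thesis
    by (metis sup.absorb_iff2)
qed

lemma surj_sq:
  fixes f :: "'a \<Rightarrow> 'b"
  assumes "surj f"
  shows "surj (sq f)"
  unfolding surj_def
proof
  fix q :: "'b \<times> 'b"
  obtain a b where "f a = fst q" "f b = snd q"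
    using assms by (metis surjD)
  then have "q = sq f (a, b)"
    by (simp add: sq_def)
  then show "\<exists>p. q = sq f p"
    by blast
qed

lemma proj_approx_sq:
  assumes "surj f" and "approx_respects A f"
  shows "proj_approx A f (sq f p) = sq f (A p)"
proof -
  define B where "B q = sq f (A (SOME p. sq f p = q))" for q
  have B_sq: "B (sq f p) = sq f (A p)" for p
  proof -
    have "sq f (SOME p'. sq f p' = sq f p) = sq f p"
      by (rule someI_ex) blast
    then show ?thesis
      using assms(2) unfolding B_def approx_respects_def by blast
  qed
  have "proj_approx A f = B"
    unfolding proj_approx_def
  proof (rule the_equality)
    show "\<forall>p. B (sq f p) = sq f (A p)"
      using B_sq by blast
  next
    fix C assume "\<forall>p. C (sq f p) = sq f (A p)"
    then have C_sq: "C (sq f p) = sq f (A p)" for p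
      by blast
    show "C = B"
    proof
      fix q
      obtain p where "q = sq f p"
        using surj_sq[OF assms(1)] by blast
      then show "C q = B q"
        by (simp only: B_sq C_sq)
    qed
  qed
  then show ?thesis
    using B_sq by simp
qed

lemma refinement_sq:
  assumes mono: "mono f"
    and commute: "\<And>p. B' (sq f p) = sq f (B p)"
    and "refinement B p p'"
  shows "refinement B' (sq f p) (sq f p')"
proof -
  have commute': "B' (f a, f b) = (f (fst (B (a, b))), f (snd (B (a, b))))" for a b
    using commute[of "(a, b)"] by (simp add: sq_def)
  obtain x y x' y' where "p = (x, y)" "p' = (x', y')"
    by fastforce
  with \<open>refinement B p p'\<close> show ?thesis
    unfolding refinement_def leq_p_def
    by (auto simp: sq_def commute' intro: monoD[OF mono])
qed

theorem propositionA1: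
  fixes f :: "'a::complete_lattice \<Rightarrow> 'b::complete_lattice"
    and Op :: "'a \<Rightarrow> 'a"
    and A :: "'a \<times> 'a \<Rightarrow> 'a \<times> 'a"
    and x y x' y' :: 'a
  assumes "lattice_morphism f"
    and "surj f"
    and "approximator A Op"
    and "symmetric_approx A"
    and "op_respects Op f"
    and "approx_respects A f"
    and "refinement A (x, y) (x', y')"
  shows "refinement (proj_approx A f) (f x, f y) (f x', f y')"
proof -
  have "mono f"
    using lattice_morphism_mono[OF assms(1)] by (rule monoI)
  moreover have "\<And>p. proj_approx A f (sq f p) = sq f (A p)"
    using proj_approx_sq[OF assms(2,6)] .
  ultimately have "refinement (proj_approx A f) (sq f (x, y)) (sq f (x', y'))"
    using refinement_sq assms(7) by blast
  then show ?thesis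
    by (simp add: sq_def)
qed

end
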